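(* Let $X$, $d$, $(e_n,e_n^* )$, $\mathbb{P}$, $V$, $F$, $(g_k)$, $(m_k)$, $(\lambda_k)$, $S$ and $T$ be as in the context. Then the $d$-fold direct sum $T_d=T\oplus\cdots\oplus T$ on $X^d$ is not recurrent.
   Context: Let $X$ be a separable infinite-dimensional complex Banach space and $d\in\mathbb{N}$. Let $(e_n,e_n^* )_{n\in\mathbb{N}}\subset X\times X^*$ satisfy: $\mathrm{span}\{e_n\}$ is dense in $X$, $e_n^*(e_m)=\delta_{n,m}$, $\|e_n\|=1$ and $\sup_n\|e_n^*\|<\infty$. Let $V=\mathrm{span}(e_1,\dots,e_d)$ and $\mathbb{P}x=\sum_{i=1}^d e_i^*(x)e_i$. Let $F\subset V$ be asymptotically separated (i.e. there are $g_n\in X^*$ with $\liminf_n|g_n(x)|=0$ for $x\in F$ and $\lim_n|g_n(x)|=\infty$ for $x\in V\setminus F$), with both $F$ and $V\setminus F$ dense in $V$. Let $(m_k)$ be an increasing sequence of positive integers with $m_k\mid m_{k+1}$ for all $k$ and $\sum_{k\ge d+1}\frac{m_{k-2}}{m_{k-1}}\|g_k\|<\infty$. Let $\lambda_k=1$ for $1\le k\le d$ and $\lambda_k=\exp(i\pi/m_k)$ for $k>d$, and let $S$ be the bounded operator on $X$ extending $\sum_{k=1}^\ell x_ke_k\mapsto\sum_{k=1}^\ell\lambda_kx_ke_k$. Define $Tx=Sx+\sum_{k=d+1}^\infty\frac{1}{m_{k-1}}g_k(\mathbb{P}x)e_k$. It is known (Augé) that $T$ is a bounded operator with $\{x:\|T^nx\|\to\infty\}=\mathbb{P}^{-1}(V\setminus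 F)$ and $\mathrm{Rec}(T)=\mathbb{P}^{-1}(F)$, where $\mathrm{Rec}(T)$ is the set of $x$ with $T^{\omega_n}x\to x$ for some strictly increasing sequence $(\omega_n)$ of positive integers. An operator is recurrent if its set of recurrent vectors is dense. *)

theory Defs
  imports "HOL-Analysis.Analysis"
begin

class complex_vector = real_vector +
  fixes scaleC :: "complex \<Rightarrow> 'a \<Rightarrow> 'a" (infixr "*\<^sub>C" 75)
  assumes scaleC_add_right: "a *\<^sub>C (x + y) = a *\<^sub>C x + a *\<^sub>C y"
    and scaleC_add_left: "(a + b) *\<^sub>C x = a *\<^sub>C x + b *\<^sub>C x"
    and scaleC_scaleC: "a *\<^sub>C (b *\<^sub>C x) = (a * b) *\<^sub>C x"
    and scaleC_one: "1 *\<^sub>C x = x"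
    and scaleR_scaleC: "scaleR r x = of_real r *\<^sub>C x"

class complex_normed_vector = complex_vector + real_normed_vector +
  assumes norm_scaleC: "norm (a *\<^sub>C x) = cmod a * norm x"

instantiation complex :: complex_normed_vector
begin
definition scaleC_complex_def: "scaleC (a::complex) (x::complex) = a * x"
instance
  by standard (auto simp: scaleC_complex_def algebra_simps norm_mult scaleR_conv_of_real)
end

text \<open>Bounded complex-linear maps (elements of X* when the codomain is complex,
  bounded operators when the codomain is X).\<close>
definition bounded_clinear :: "('a::complex_normed_vector \<Rightarrow> 'b::complex_normed_vector) \<Rightarrow> bool" where
  "bounded_clinear f \<longleftrightarrow> bounded_linear f \<and> (\<forall>c x. f (c *\<^sub>C x) = c *\<^sub>C f x)"

definition cspan :: "'a::complex_vector set \<Rightarrow> 'a set" where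
  "cspan B = {x. \<exists>I c. finite I \<and> I \<subseteq> B \<and> x = (\<Sum>v\<in>I. c v *\<^sub>C v)}"

text \<open>A vector x of X^d (represented by its components x 0, ..., x (d-1)) is recurrent
  for the d-fold direct sum of T if T_d^(omega n) x tends to x along some strictly
  increasing sequence of positive integers.\<close>
definition dsum_recurrent_vector :: "('a::metric_space \<Rightarrow> 'a) \<Rightarrow> nat \<Rightarrow> (nat \<Rightarrow> 'a) \<Rightarrow> bool" where
  "dsum_recurrent_vector T d x \<longleftrightarrow>
     (\<exists>\<omega>::nat \<Rightarrow> nat. strict_mono \<omega> \<and> (\<forall>n. 0 < \<omega> n) \<and>
        (\<forall>i<d. (\<lambda>n. (T ^^ \<omega> n) (x i)) \<longlonglongrightarrow> x i))"

text \<open>The d-fold direct sum of T is recurrent: its recurrent vectors are dense in X^d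
  (product topology).\<close>
definition dsum_recurrent :: "('a::metric_space \<Rightarrow> 'a) \<Rightarrow> nat \<Rightarrow> bool" where
  "dsum_recurrent T d \<longleftrightarrow>
     (\<forall>y::nat \<Rightarrow> 'a. \<forall>\<epsilon>>0. \<exists>x. dsum_recurrent_vector T d x \<and> (\<forall>i<d. dist (x i) (y i) < \<epsilon>))"

end

theory Submission
  imports Defs
begin

text \<open>
  If Px lies outside F, the orbit of x escapes: for m_{k-1} \<le> N \<le> m_k the k-th coordinate
  of T^N x - x equals (\<lambda>_k^N - 1)(e*_k(x) + c_k / (\<lambda>_k - 1)) with c_k = g_k(Px) / m_{k-1}, and
  since |\<lambda>_k^N - 1| is of order N / m_k while |\<lambda>_k - 1| is of order 1 / m_k, this coordinate
  is of order |g_k(Px)| \<rightarrow> \<infinity>. So every recurrent vector of T lies in P^{-1}(F).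
  If the direct sum were recurrent, there would be a recurrent tuple (x_1, ..., x_d) close to
  (e_1, ..., e_d). Every linear combination of the x_i is recurrent for T, and P maps their
  span onto V, being close to the identity there; a combination mapped to a point of V - F
  is a recurrent vector outside P^{-1}(F).
\<close>

subsection \<open>Complex-linear maps\<close>

lemma scaleC_zero_left [simp]: "0 *\<^sub>C x = (0::'a::complex_vector)"
  by (metis scaleR_scaleC scaleR_zero_left of_real_0)

lemma scaleC_zero_right [simp]: "a *\<^sub>C (0::'a::complex_vector) = 0"
  by (metis add_cancel_right_right scaleC_add_right add_0)

lemma scaleC_diff_right: "a *\<^sub>C (x - y::'a::complex_vector) = a *\<^sub>C x - a *\<^sub>C y"
  by (metis add_diff_cancel diff_add_cancel scaleC_add_right)

lemma scaleC_sum_right: "a *\<^sub>C (\<Sum>i\<in>I. f i::'a::complex_vector) = (\<Sum>i\<in>I. a *\<^sub>C f i)"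
  by (induction I rule: infinite_finite_induct) (simp_all add: scaleC_add_right)

lemma scaleC_complex [simp]: "a *\<^sub>C (x::complex) = a * x"
  by (simp add: scaleC_complex_def)

definition clinear :: "('a::complex_vector \<Rightarrow> 'b::complex_vector) \<Rightarrow> bool" where
  "clinear f \<longleftrightarrow> (\<forall>x y. f (x + y) = f x + f y) \<and> (\<forall>c x. f (c *\<^sub>C x) = c *\<^sub>C f x)"

lemma clinear_add: "clinear f \<Longrightarrow> f (x + y) = f x + f y"
  unfolding clinear_def by blast

lemma clinear_scaleC: "clinear f \<Longrightarrow> f (c *\<^sub>C x) = c *\<^sub>C f x"
  unfolding clinear_def by blast

lemma clinear_zero: "clinear f \<Longrightarrow> f 0 = 0"
  by (metis clinear_scaleC scaleC_zero_left)

lemma clinear_diff: "clinear f \<Longrightarrow> f (x - y) = f x - f y"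
  by (metis clinear_add eq_diff_eq)

lemma clinear_sum: "clinear f \<Longrightarrow> f (\<Sum>i\<in>I. h i) = (\<Sum>i\<in>I. f (h i))"
  by (induction I rule: infinite_finite_induct) (simp_all add: clinear_zero clinear_add)

lemma clinear_funpow:
  fixes f :: "'a::complex_vector \<Rightarrow> 'a"
  shows "clinear f \<Longrightarrow> clinear (f ^^ n)"
  by (induction n) (simp_all add: clinear_def)

lemma clinear_linear: "clinear f \<Longrightarrow> linear f"
  by (rule linearI) (simp_all add: clinear_add clinear_scaleC scaleR_scaleC)

lemma bounded_clinear_bounded_linear: "bounded_clinear f \<Longrightarrow> bounded_linear f"
  unfolding bounded_clinear_def by blast

lemma bounded_clinear_clinear: "bounded_clinear f \<Longrightarrow> clinear f"
  unfolding bounded_clinear_def clinear_def by (metis bounded_linear.linear linear_add)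

lemma bounded_linear_scaleC_right: "bounded_linear (\<lambda>x::'a::complex_normed_vector. c *\<^sub>C x)"
  by (rule bounded_linear_intro[where K="cmod c"])
    (simp_all add: scaleC_add_right scaleR_scaleC scaleC_scaleC mult.commute norm_scaleC)

lemma bounded_clinear_scaleC_left:
  fixes f :: "'a::complex_normed_vector \<Rightarrow> complex" and v :: "'b::complex_normed_vector"
  assumes f: "bounded_clinear f"
  shows "bounded_clinear (\<lambda>x. f x *\<^sub>C v)"
proof -
  have "bounded_linear (\<lambda>z::complex. z *\<^sub>C v)"
    by (rule bounded_linear_intro[where K="norm v"])
      (simp_all add: scaleC_add_left scaleR_scaleC scaleC_scaleC scaleR_conv_of_real norm_scaleC)
  then have "bounded_linear (\<lambda>x. f x *\<^sub>C v)"
    using bounded_linear_compose bounded_clinear_bounded_linear[OF f] by blast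
  moreover have "f (c *\<^sub>C x) *\<^sub>C v = c *\<^sub>C (f x *\<^sub>C v)" for c x
    using f by (simp add: bounded_clinear_def scaleC_scaleC)
  ultimately show ?thesis
    unfolding bounded_clinear_def by blast
qed

lemma bounded_clinear_sum:
  "(\<And>i. i \<in> I \<Longrightarrow> bounded_clinear (f i)) \<Longrightarrow> bounded_clinear (\<lambda>x. \<Sum>i\<in>I. f i x)"
  unfolding bounded_clinear_def by (auto intro: bounded_linear_sum simp: scaleC_sum_right)

lemma bounded_clinear_compose:
  "bounded_clinear f \<Longrightarrow> bounded_clinear h \<Longrightarrow> bounded_clinear (\<lambda>x. f (h x))"
  unfolding bounded_clinear_def by (auto intro: bounded_linear_compose)

lemma bounded_clinear_eq_on_dense_cspan:
  assumes f: "bounded_clinear f" and h: "bounded_clinear h"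
    and eq: "\<And>v. v \<in> B \<Longrightarrow> f v = h v" and dense: "closure (cspan B) = UNIV"
  shows "f x = h x"
proof -
  have "cspan B \<subseteq> {x. f x = h x}"
  proof
    fix x assume "x \<in> cspan B"
    then obtain I c where I: "finite I" "I \<subseteq> B" "x = (\<Sum>v\<in>I. c v *\<^sub>C v)"
      unfolding cspan_def by blast
    have "f x = (\<Sum>v\<in>I. c v *\<^sub>C f v)"
      using I bounded_clinear_clinear[OF f] by (simp add: clinear_sum clinear_scaleC)
    also have "\<dots> = (\<Sum>v\<in>I. c v *\<^sub>C h v)" using I eq by (intro sum.cong) auto
    also have "\<dots> = h x"
      using I bounded_clinear_clinear[OF h] by (simp add: clinear_sum clinear_scaleC)
    finally show "x \<in> {x. f x = h x}" by simp
  qed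
  moreover have "closed {x. f x = h x}"
    using f h unfolding bounded_clinear_def
    by (intro closed_Collect_eq) (auto intro: linear_continuous_on)
  ultimately have "closure (cspan B) \<subseteq> {x. f x = h x}" by (rule closure_minimal)
  then show ?thesis using dense by auto
qed

lemma tendsto_funpow_lincomb:
  fixes T :: "'a::complex_normed_vector \<Rightarrow> 'a"
  assumes T: "clinear T" and lim: "\<And>i. i \<in> I \<Longrightarrow> (\<lambda>n. (T ^^ \<omega> n) (x i)) \<longlonglongrightarrow> x i"
  shows "(\<lambda>n. (T ^^ \<omega> n) (\<Sum>i\<in>I. c i *\<^sub>C x i)) \<longlonglongrightarrow> (\<Sum>i\<in>I. c i *\<^sub>C x i)"
proof -
  have "(T ^^ \<omega> n) (\<Sum>i\<in>I. c i *\<^sub>C x i) = (\<Sum>i\<in>I. c i *\<^sub>C (T ^^ \<omega> n) (x i))" for n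
    using clinear_funpow[OF T] by (simp add: clinear_sum clinear_scaleC)
  moreover have "(\<lambda>n. \<Sum>i\<in>I. c i *\<^sub>C (T ^^ \<omega> n) (x i)) \<longlonglongrightarrow> (\<Sum>i\<in>I. c i *\<^sub>C x i)"
    by (intro tendsto_sum bounded_linear.tendsto[OF bounded_linear_scaleC_right]) (use lim in auto)
  ultimately show ?thesis by simp
qed

lemma surj_if_close_to_id:
  fixes R :: "'a::banach \<Rightarrow> 'a"
  assumes R: "linear R" and c: "0 \<le> c" "c < 1" and close: "\<And>y. norm (y - R y) \<le> c * norm y"
  shows "surj R"
proof -
  have "w \<in> range R" for w
  proof -
    have "dist (w + (u - R u)) (w + (v - R v)) = norm ((u - v) - R (u - v))" for u v
      by (simp add: dist_norm linear_diff[OF R] algebra_simps)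
    then have "\<forall>u v. dist (w + (u - R u)) (w + (v - R v)) \<le> c * dist u v"
      using close by (simp add: dist_norm)
    then have "\<exists>!u. w + (u - R u) = u"
      by (rule banach_fix_type[OF c])
    then obtain u where "w + (u - R u) = u"
      by (meson ex1_implies_ex)
    then have "w = R u" by (simp add: algebra_simps)
    then show ?thesis by blast
  qed
  then show ?thesis by blast
qed

lemma projection_comp_onto_range:
  fixes P Q :: "'a::banach \<Rightarrow> 'a"
  assumes P: "linear P" "\<And>y. P (P y) = P y" and Q: "linear Q"
    and c: "0 \<le> c" "c < 1" and close: "\<And>y. norm (P y - P (Q y)) \<le> c * norm y"
    and w: "P w = w"
  obtains u where "P (Q u) = w"
proof -
  define R where "R y = P (Q y) + (y - P y)" for y
  have "linear R"
    by (rule linearI)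
      (simp_all add: R_def P Q linear_add linear_diff linear_scale scaleR_add_right scaleR_diff_right)
  moreover have "norm (y - R y) \<le> c * norm y" for y
    using close[of y] by (simp add: R_def)
  ultimately have "surj R"
    using surj_if_close_to_id[OF _ c] by blast
  then obtain u where "R u = w"
    using surjD[of R w] by blast
  have "P (Q u) = P (R u)"
    using P by (simp add: R_def linear_add linear_diff)
  then show ?thesis using \<open>R u = w\<close> w that by simp
qed

lemma not_tendsto_subseq_if_diverges:
  assumes div: "filterlim (\<lambda>n. norm (f n - x)) at_top sequentially" and \<omega>: "strict_mono \<omega>"
  shows "\<not> (\<lambda>n. f (\<omega> n)) \<longlonglongrightarrow> x"
proof
  assume "(\<lambda>n. f (\<omega> n)) \<longlonglongrightarrow> x"
  then have "(\<lambda>n. norm (f (\<omega> n) - x)) \<longlonglongrightarrow> 0"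
    using tendsto_norm_zero tendsto_diff[OF _ tendsto_const] by (metis LIM_zero)
  moreover have "filterlim (\<lambda>n. norm (f (\<omega> n) - x)) at_infinity sequentially"
    using filterlim_compose[OF div filterlim_subseq[OF \<omega>]]
    by (auto intro: filterlim_at_top_imp_at_infinity)
  ultimately show False
    using not_tendsto_and_filterlim_at_infinity by (metis trivial_limit_sequentially)
qed

lemma sin_ge_third:
  fixes y :: real
  assumes "0 \<le> y" "y \<le> 2"
  shows "y / 3 \<le> sin y"
proof -
  have "\<bar>sin y - (\<Sum>m<3. sin_coeff m * y ^ m)\<bar> \<le> inverse (fact 3) * \<bar>y\<bar> ^ 3"
    by (rule Maclaurin_sin_bound)
  moreover have "(\<Sum>m<3. sin_coeff m * y ^ m) = y"
    by (simp add: sin_coeff_def numeral_3_eq_3)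
  ultimately have "\<bar>sin y - y\<bar> * 6 \<le> y ^ 3"
    using assms by (simp add: fact_numeral)
  moreover have "6 * (y - sin y) \<le> \<bar>sin y - y\<bar> * 6"
    by (simp add: abs_if)
  ultimately have "y - y ^ 3 / 6 \<le> sin y"
    by (simp add: field_simps; linarith)
  moreover have "y ^ 3 \<le> 4 * y"
  proof -
    have "y * y \<le> 2 * 2" using assms by (intro mult_mono) auto
    then show ?thesis using assms by (simp add: power3_eq_cube mult_left_mono mult.commute)
  qed
  ultimately show ?thesis by linarith
qed

subsection \<open>The operator T\<close>

locale auge_operator =
  fixes e :: "nat \<Rightarrow> 'a::{complex_normed_vector, banach}"
    and estar :: "nat \<Rightarrow> 'a \<Rightarrow> complex"
    and g :: "nat \<Rightarrow> 'a \<Rightarrow> complex"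
    and d :: nat and m :: "nat \<Rightarrow> nat"
    and V F :: "'a set"
    and P S T :: "'a \<Rightarrow> 'a"
    and lam :: "nat \<Rightarrow> complex"
  assumes d_pos: "1 \<le> d"
    and estar_dual: "\<forall>n\<ge>1. bounded_clinear (estar n)"
    and e_dense: "closure (cspan (e ` {1..})) = UNIV"
    and biorth: "\<forall>n\<ge>1. \<forall>k\<ge>1. estar n (e k) = (if n = k then 1 else 0)"
    and e_norm: "\<forall>n\<ge>1. norm (e n) = 1"
    and estar_bdd: "\<exists>C. \<forall>n\<ge>1. onorm (estar n) \<le> C"
    and V_def: "V = cspan (e ` {1..d})"
    and P_def: "\<forall>x. P x = (\<Sum>i=1..d. estar i x *\<^sub>C e i)"
    and g_dual: "\<forall>n\<ge>1. bounded_clinear (g n)"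
    and nonF_sep: "\<forall>x\<in>V - F. filterlim (\<lambda>n. cmod (g n x)) at_top sequentially"
    and nonF_dense: "V \<subseteq> closure (V - F)"
    and m_pos: "\<forall>k\<ge>1. 0 < m k"
    and m_incr: "\<forall>k\<ge>1. m k < m (Suc k)"
    and m_sum: "summable (\<lambda>k. real (m (k + d - 1)) / real (m (k + d)) * onorm (g (k + d + 1)))"
    and lam_def: "\<forall>k. lam k = (if k \<le> d then 1 else exp (\<i> * of_real pi / of_nat (m k)))"
    and S_bdd: "bounded_clinear S"
    and S_diag: "\<forall>k\<ge>1. S (e k) = lam k *\<^sub>C e k"
    and T_def: "\<forall>x. T x = S x + (\<Sum>k. (if d + 1 \<le> k then (1 / of_nat (m (k - 1))) * g k (P x) else 0) *\<^sub>C e k)"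
begin

definition tail_coeff :: "nat \<Rightarrow> 'a \<Rightarrow> complex" where
  "tail_coeff k x = (if d + 1 \<le> k then (1 / of_nat (m (k - 1))) * g k (P x) else 0)"

lemma T_eq: "T x = S x + (\<Sum>k. tail_coeff k x *\<^sub>C e k)"
  using T_def by (simp add: tail_coeff_def)

lemma estar_e: "n \<ge> 1 \<Longrightarrow> k \<ge> 1 \<Longrightarrow> estar n (e k) = (if n = k then 1 else 0)"
  using biorth by blast

lemma bounded_clinear_estar: "n \<ge> 1 \<Longrightarrow> bounded_clinear (estar n)"
  using estar_dual by blast

lemma estar_uniformly_bounded: "\<exists>C\<ge>1. \<forall>n\<ge>1. \<forall>y. cmod (estar n y) \<le> C * norm y"
proof -
  obtain C where C: "\<forall>n\<ge>1. onorm (estar n) \<le> C" using estar_bdd by blast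
  have "cmod (estar n y) \<le> max C 1 * norm y" if "n \<ge> 1" for n y
  proof -
    have "cmod (estar n y) \<le> onorm (estar n) * norm y"
      using onorm bounded_clinear_bounded_linear bounded_clinear_estar that by blast
    also have "\<dots> \<le> max C 1 * norm y"
      using C that by (intro mult_right_mono) auto
    finally show ?thesis .
  qed
  then show ?thesis by (intro exI[of _ "max C 1"]) auto
qed

lemma m_ge_index: "1 \<le> k \<Longrightarrow> k \<le> m k"
proof (induction k)
  case (Suc k)
  then show ?case
    using m_pos m_incr by (cases "k = 0") (auto simp: Suc_le_eq intro: le_less_trans)
qed simp

lemma m_ge_2: "d + 1 \<le> k \<Longrightarrow> 2 \<le> m k"
  using m_ge_index[of k] d_pos by simp

lemma bounded_clinear_P: "bounded_clinear P"
proof -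
  have "P = (\<lambda>x. \<Sum>i=1..d. estar i x *\<^sub>C e i)" using P_def by blast
  then show ?thesis
    by (auto intro!: bounded_clinear_sum bounded_clinear_scaleC_left bounded_clinear_estar)
qed

lemma clinear_P: "clinear P"
  by (rule bounded_clinear_clinear[OF bounded_clinear_P])

lemma P_e: assumes j: "j \<in> {1..d}" shows "P (e j) = e j"
proof -
  have "estar i (e j) *\<^sub>C e i = (if i = j then e i else 0)" if "i \<in> {1..d}" for i
    using estar_e that j by (auto simp: scaleC_one)
  then have "P (e j) = (\<Sum>i=1..d. if i = j then e i else 0)"
    using P_def by (auto intro!: sum.cong)
  then show ?thesis using j by (simp add: sum.delta')
qed

lemma P_V: assumes "v \<in> V" shows "P v = v"
proof -
  obtain I c where I: "finite I" "I \<subseteq> e ` {1..d}" "v = (\<Sum>u\<in>I. c u *\<^sub>C u)"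
    using assms unfolding V_def cspan_def by blast
  have "P v = (\<Sum>u\<in>I. c u *\<^sub>C P u)"
    using I clinear_P by (simp add: clinear_sum clinear_scaleC)
  also have "\<dots> = v"
    using I P_e by (auto intro!: sum.cong)
  finally show ?thesis .
qed

lemma P_in_V: "P x \<in> V"
proof -
  have inj: "inj_on e {1..d}"
  proof (rule inj_onI)
    fix i j assume "i \<in> {1..d}" "j \<in> {1..d}" "e i = e j"
    then show "i = j" using estar_e[of i i] estar_e[of i j] by (auto split: if_splits)
  qed
  define c where "c v = estar (inv_into {1..d} e v) x" for v
  have "P x = (\<Sum>v\<in>e ` {1..d}. c v *\<^sub>C v)"
    using P_def inj by (simp add: sum.reindex c_def)
  then show ?thesis
    unfolding V_def cspan_def by (intro CollectI exI[of _ "e ` {1..d}"] exI[of _ c]) simp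
qed

lemma P_idem: "P (P y) = P y"
  using P_V[OF P_in_V] .

subsection \<open>Coordinates of the iterates of T\<close>

lemma estar_S: assumes n: "n \<ge> 1" shows "estar n (S x) = lam n * estar n x"
proof (rule bounded_clinear_eq_on_dense_cspan[OF _ _ _ e_dense])
  show "bounded_clinear (\<lambda>x. estar n (S x))"
    by (rule bounded_clinear_compose[OF bounded_clinear_estar[OF n] S_bdd])
  have "bounded_clinear (\<lambda>x. estar n x *\<^sub>C lam n)"
    by (rule bounded_clinear_scaleC_left[OF bounded_clinear_estar[OF n]])
  then show "bounded_clinear (\<lambda>x. lam n * estar n x)"
    by (simp add: mult.commute)
  fix v assume "v \<in> e ` {1..}"
  then show "estar n (S v) = lam n * estar n v"
    using S_diag n bounded_clinear_clinear[OF bounded_clinear_estar[OF n]]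
    by (auto simp: clinear_scaleC estar_e)
qed

text \<open>The summability hypothesis on (m_k) is stronger than what is needed here, because
  the factor m_{k-2} is at least 1.\<close>
lemma summable_tail: "summable (\<lambda>k. tail_coeff k x *\<^sub>C e k)"
proof -
  let ?f = "\<lambda>k. tail_coeff k x *\<^sub>C e k"
  let ?h = "\<lambda>j. norm (P x) * (real (m (j + d - 1)) / real (m (j + d)) * onorm (g (j + d + 1)))"
  have "summable (\<lambda>j. norm (?f (j + (d + 1))))"
  proof (rule summable_comparison_test'[OF summable_mult[OF m_sum], of 1])
    fix j :: nat assume j: "j \<ge> 1"
    define k where "k = j + (d + 1)"
    have mk2: "real (m (j + d - 1)) \<ge> 1" and mk1: "real (m (j + d)) > 0"
      using m_pos j d_pos by (simp_all add: Suc_le_eq)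
    have g: "bounded_linear (g k)" and ek: "norm (e k) = 1"
      using g_dual e_norm bounded_clinear_bounded_linear k_def by auto
    have "norm (?f k) = cmod (g k (P x)) / real (m (j + d))"
      using ek by (simp add: k_def tail_coeff_def norm_scaleC norm_divide norm_mult)
    also have "\<dots> \<le> onorm (g k) * norm (P x) / real (m (j + d))"
      using onorm[OF g] mk1 by (simp add: divide_right_mono)
    also have "\<dots> \<le> onorm (g k) * norm (P x) * real (m (j + d - 1)) / real (m (j + d))"
    proof -
      have "onorm (g k) * norm (P x) * 1 \<le> onorm (g k) * norm (P x) * real (m (j + d - 1))"
        using mk2 onorm_pos_le[OF g] by (intro mult_left_mono) auto
      then show ?thesis using mk1 by (simp add: divide_right_mono)
    qed
    also have "\<dots> = ?h j" by (simp add: k_def field_simps)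
    finally show "norm (norm (?f (j + (d + 1)))) \<le> ?h j" by (simp add: k_def)
  qed
  then have "summable (\<lambda>k. norm (?f k))"
    by (rule iffD1[OF summable_iff_shift])
  then show ?thesis
    by (rule summable_norm_cancel)
qed

lemma estar_T: assumes n: "n \<ge> 1" shows "estar n (T x) = lam n * estar n x + tail_coeff n x"
proof -
  have bl: "bounded_linear (estar n)" and cl: "clinear (estar n)"
    using bounded_clinear_estar[OF n] bounded_clinear_bounded_linear bounded_clinear_clinear by auto
  have "estar n (tail_coeff k x *\<^sub>C e k) = (if k = n then tail_coeff n x else 0)" for k
    using n d_pos cl by (cases "k = 0") (auto simp: tail_coeff_def clinear_scaleC clinear_zero estar_e)
  then have "(\<lambda>k. estar n (tail_coeff k x *\<^sub>C e k)) sums tail_coeff n x"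
    using sums_single[of n "\<lambda>_. tail_coeff n x"] by simp
  then have "estar n (\<Sum>k. tail_coeff k x *\<^sub>C e k) = tail_coeff n x"
    using bounded_linear.suminf[OF bl summable_tail] by (simp add: sums_iff)
  then show ?thesis
    using T_eq clinear_add[OF cl] estar_S[OF n] by simp
qed

lemma P_T: "P (T x) = P x"
proof -
  have "estar i (T x) = estar i x" if "i \<in> {1..d}" for i
    using estar_T[of i x] lam_def that by (simp add: tail_coeff_def)
  then have "(\<Sum>i=1..d. estar i (T x) *\<^sub>C e i) = (\<Sum>i=1..d. estar i x *\<^sub>C e i)"
    by (intro sum.cong) auto
  then show ?thesis
    using P_def by metis
qed

lemma P_funpow_T: "P ((T ^^ n) x) = P x"
  by (induction n) (auto simp: P_T)

lemma tail_coeff_funpow_T: "tail_coeff k ((T ^^ n) x) = tail_coeff k x"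
  by (simp add: tail_coeff_def P_funpow_T)

lemma clinear_tail_coeff: "clinear (tail_coeff k)"
proof (cases "d + 1 \<le> k")
  case True
  then have "clinear (g k)" using g_dual bounded_clinear_clinear[of "g k"] by simp
  then show ?thesis
    using True clinear_P by (simp add: clinear_def tail_coeff_def distrib_left)
qed (simp add: clinear_def tail_coeff_def)

lemma clinear_T: "clinear T"
proof -
  have cS: "clinear S" and ct: "clinear (tail_coeff k)" for k
    using S_bdd bounded_clinear_clinear clinear_tail_coeff by auto
  have "T (x + y) = T x + T y" for x y
  proof -
    have "(\<Sum>k. tail_coeff k (x + y) *\<^sub>C e k) = (\<Sum>k. tail_coeff k x *\<^sub>C e k + tail_coeff k y *\<^sub>C e k)"
      by (simp add: clinear_add[OF ct] scaleC_add_left)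
    also have "\<dots> = (\<Sum>k. tail_coeff k x *\<^sub>C e k) + (\<Sum>k. tail_coeff k y *\<^sub>C e k)"
      by (rule suminf_add[symmetric, OF summable_tail summable_tail])
    finally show ?thesis
      unfolding T_eq clinear_add[OF cS] by (simp add: algebra_simps)
  qed
  moreover have "T (c *\<^sub>C x) = c *\<^sub>C T x" for c x
  proof -
    have "(\<Sum>k. tail_coeff k (c *\<^sub>C x) *\<^sub>C e k) = (\<Sum>k. c *\<^sub>C (tail_coeff k x *\<^sub>C e k))"
      by (simp add: clinear_scaleC[OF ct] scaleC_scaleC)
    also have "\<dots> = c *\<^sub>C (\<Sum>k. tail_coeff k x *\<^sub>C e k)"
      by (rule bounded_linear.suminf[symmetric, OF bounded_linear_scaleC_right summable_tail])
    finally show ?thesis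
      unfolding T_eq clinear_scaleC[OF cS] by (simp add: scaleC_add_right)
  qed
  ultimately show ?thesis by (simp add: clinear_def)
qed

text \<open>On the k-th coordinate T acts as the affine map a \<mapsto> \<lambda>_k a + c_k(x), whose orbit is
  explicit because c_k is T-invariant.\<close>
lemma estar_funpow_T_diff:
  assumes k: "d + 1 \<le> k" and l1: "lam k \<noteq> 1"
  shows "estar k ((T ^^ n) x) - estar k x
     = (lam k ^ n - 1) * (estar k x + tail_coeff k x / (lam k - 1))"
proof -
  define B where "B = estar k x + tail_coeff k x / (lam k - 1)"
  have B: "(lam k - 1) * estar k x + tail_coeff k x = (lam k - 1) * B"
    using l1 unfolding B_def by (simp add: field_simps)
  have "estar k ((T ^^ n) x) - estar k x = (lam k ^ n - 1) * B"
  proof (induction n)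
    case (Suc n)
    have "estar k ((T ^^ Suc n) x) - estar k x
        = lam k * (estar k ((T ^^ n) x) - estar k x) + ((lam k - 1) * estar k x + tail_coeff k x)"
      using estar_T[of k "(T ^^ n) x"] k by (simp add: tail_coeff_funpow_T algebra_simps)
    also have "\<dots> = lam k * ((lam k ^ n - 1) * B) + (lam k - 1) * B"
      using Suc B by simp
    also have "\<dots> = (lam k ^ Suc n - 1) * B"
      by (simp add: algebra_simps)
    finally show ?case .
  qed simp
  then show ?thesis unfolding B_def .
qed

lemma lam_eq: "d + 1 \<le> k \<Longrightarrow> lam k = exp (\<i> * of_real (pi / real (m k)))"
  using lam_def by simp

lemma lam_power:
  assumes "d + 1 \<le> k"
  shows "lam k ^ N = exp (\<i> * of_real (real N * (pi / real (m k))))"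
proof -
  have "lam k ^ N = exp (\<i> * of_real (pi / real (m k))) ^ N"
    unfolding lam_eq[OF assms] ..
  also have "\<dots> = exp (of_nat N * (\<i> * of_real (pi / real (m k))))"
    by (rule exp_of_nat_mult[symmetric])
  also have "of_nat N * (\<i> * of_real (pi / real (m k))) = \<i> * of_real (real N * (pi / real (m k)))"
    by simp
  finally show ?thesis .
qed

lemma norm_lam_minus_1:
  assumes k: "d + 1 \<le> k"
  shows "0 < cmod (lam k - 1)" "cmod (lam k - 1) \<le> pi / real (m k)"
proof -
  let ?t = "pi / real (m k)"
  have mk: "real (m k) \<ge> 2" using m_ge_2[OF k] by simp
  have t0: "0 < ?t" using mk by simp
  have t1: "?t \<le> pi / 2" using mk by (intro divide_left_mono) auto
  have eq: "cmod (lam k - 1) = 2 * \<bar>sin (?t / 2)\<bar>"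
    unfolding lam_eq[OF k] by (rule dist_exp_i_1)
  have "0 < sin (?t / 2)" using t0 t1 by (intro sin_gt_zero) auto
  then show "0 < cmod (lam k - 1)" using eq by simp
  show "cmod (lam k - 1) \<le> ?t" using eq abs_sin_x_le_abs_x[of "?t/2"] t0 by simp
qed

lemma norm_lam_power_minus_1_ge:
  assumes k: "d + 1 \<le> k" and N: "N \<le> m k"
  shows "real N * (pi / real (m k)) / 3 \<le> cmod (lam k ^ N - 1)"
proof -
  define t where "t = real N * (pi / real (m k))"
  have mk: "real (m k) \<ge> 2" using m_ge_2[OF k] by simp
  have "t \<le> real (m k) * (pi / real (m k))"
    unfolding t_def using N by (intro mult_right_mono) auto
  also have "\<dots> = pi" using mk by simp
  finally have "t / 2 \<le> 2" using pi_less_4 by linarith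
  moreover have "0 \<le> t / 2" unfolding t_def by simp
  ultimately have "t / 2 / 3 \<le> sin (t / 2)" by (intro sin_ge_third)
  moreover have "cmod (lam k ^ N - 1) = 2 * \<bar>sin (t / 2)\<bar>"
    unfolding lam_power[OF k] t_def by (rule dist_exp_i_1)
  ultimately show ?thesis
    unfolding t_def[symmetric] using abs_ge_self[of "sin (t / 2)"] by linarith
qed

lemma norm_lam_power_minus_1_le:
  assumes "d + 1 \<le> k"
  shows "cmod (lam k ^ N - 1) \<le> 2"
proof -
  have "cmod (lam k ^ N) = 1"
    unfolding lam_power[OF assms] by (rule norm_exp_i_times)
  then show ?thesis
    using norm_triangle_ineq4[of "lam k ^ N" 1] by simp
qed

lemma estar_funpow_T_diff_ge:
  assumes k: "d + 2 \<le> k" and N: "m (k - 1) \<le> N" "N \<le> m k"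
  shows "cmod (g k (P x)) / 3 - 2 * cmod (estar k x) \<le> cmod (estar k ((T ^^ N) x) - estar k x)"
proof -
  have kd: "d + 1 \<le> k" using k by simp
  define L where "L = cmod (lam k - 1)"
  define t where "t = pi / real (m k)"
  define A where "A = cmod (lam k ^ N - 1)"
  define a where "a = estar k x"
  define c where "c = tail_coeff k x"
  have L0: "0 < L" and Lt: "L \<le> t" using norm_lam_minus_1[OF kd] unfolding L_def t_def by auto
  have t0: "t > 0" using m_ge_2[OF kd] unfolding t_def by simp
  have A1: "real N * t / 3 \<le> A" using norm_lam_power_minus_1_ge[OF kd N(2)] unfolding A_def t_def .
  have A2: "A \<le> 2" using norm_lam_power_minus_1_le[OF kd] unfolding A_def .
  have A0: "0 \<le> A" unfolding A_def by simp
  have "cmod (c / (lam k - 1)) \<le> cmod (a + c / (lam k - 1)) + cmod a"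
    using norm_triangle_ineq4[of "a + c / (lam k - 1)" a] by (simp add: norm_minus_commute)
  then have "A * (cmod c / L - cmod a) \<le> A * cmod (a + c / (lam k - 1))"
    using A0 unfolding L_def by (intro mult_left_mono) (auto simp: norm_divide)
  also have "\<dots> = cmod (estar k ((T ^^ N) x) - estar k x)"
    using estar_funpow_T_diff[OF kd, of N x] L0 unfolding A_def a_def c_def L_def
    by (simp add: norm_mult)
  finally have upper: "A * (cmod c / L) - A * cmod a \<le> cmod (estar k ((T ^^ N) x) - estar k x)"
    by (simp add: right_diff_distrib)
  have "(real N * t / 3) * (cmod c / t) \<le> A * (cmod c / L)"
    using L0 Lt t0 A0 by (intro mult_mono[OF A1] divide_left_mono) auto
  then have "real N * cmod c / 3 \<le> A * (cmod c / L)"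
    using t0 by simp
  moreover have "cmod (g k (P x)) \<le> real N * cmod c"
  proof -
    have "real (m (k - 1)) > 0" using m_pos k by auto
    then have "cmod (g k (P x)) = real (m (k - 1)) * cmod c"
      unfolding c_def tail_coeff_def using kd by (simp add: norm_mult norm_divide)
    also have "\<dots> \<le> real N * cmod c" using N(1) by (intro mult_right_mono) auto
    finally show ?thesis .
  qed
  moreover have "A * cmod a \<le> 2 * cmod a" using A2 by (intro mult_right_mono) auto
  ultimately show ?thesis
    using upper unfolding a_def by linarith
qed

lemma scale_index_exists:
  assumes "m (d + 1) \<le> N"
  shows "\<exists>k. d + 2 \<le> k \<and> m (k - 1) \<le> N \<and> N < m k"
proof -
  let ?Q = "\<lambda>k. d + 1 \<le> k \<and> N < m k"
  define k where "k = (LEAST k. ?Q k)"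
  have "?Q (N + d + 1)" using m_ge_index[of "N + d + 1"] by simp
  then have Qk: "?Q k" unfolding k_def by (rule LeastI)
  then have k2: "d + 2 \<le> k" using assms by (cases "k = d + 1") auto
  have "\<not> ?Q (k - 1)" unfolding k_def by (rule not_less_Least) (use k2 k_def in simp)
  moreover have "d + 1 \<le> k - 1" using k2 by simp
  ultimately have "m (k - 1) \<le> N" by simp
  then show ?thesis using Qk k2 by blast
qed

lemma norm_funpow_T_diff_tendsto_top:
  assumes nF: "P x \<notin> F"
  shows "filterlim (\<lambda>N. norm ((T ^^ N) x - x)) at_top sequentially"
proof -
  obtain C where C1: "C \<ge> 1" and C: "\<forall>n\<ge>1. \<forall>y. cmod (estar n y) \<le> C * norm y"
    using estar_uniformly_bounded by blast
  have g_lim: "filterlim (\<lambda>k. cmod (g k (P x))) at_top sequentially"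
    using nonF_sep P_in_V nF by blast
  have "eventually (\<lambda>N. Z \<le> norm ((T ^^ N) x - x)) sequentially" for Z
  proof -
    obtain K where K: "\<And>k. K \<le> k \<Longrightarrow> 6 * (C * norm x) + 3 * (C * Z) \<le> cmod (g k (P x))"
      using g_lim unfolding filterlim_at_top eventually_sequentially by blast
    have "Z \<le> norm ((T ^^ N) x - x)" if N: "max (m (d + 1)) (Max (m ` {..K})) \<le> N" for N
    proof -
      obtain k where k: "d + 2 \<le> k" "m (k - 1) \<le> N" "N < m k"
        using scale_index_exists N by auto
      have "K \<le> k"
      proof (rule ccontr)
        assume "\<not> K \<le> k"
        then have "m k \<le> N" using N by auto
        then show False using k(3) by simp
      qed
      have k1: "k \<ge> 1" using k by simp
      have "cmod (g k (P x)) / 3 - 2 * cmod (estar k x) \<le> cmod (estar k ((T ^^ N) x) - estar k x)"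
        using estar_funpow_T_diff_ge k by simp
      also have "\<dots> = cmod (estar k ((T ^^ N) x - x))"
        using clinear_diff[OF bounded_clinear_clinear[OF bounded_clinear_estar[OF k1]]] by simp
      also have "\<dots> \<le> C * norm ((T ^^ N) x - x)" using C k1 by blast
      moreover have "cmod (estar k x) \<le> C * norm x" using C k1 by blast
      ultimately have "C * Z \<le> C * norm ((T ^^ N) x - x)"
        using K[OF \<open>K \<le> k\<close>] by linarith
      then show ?thesis using C1 by simp
    qed
    then show ?thesis unfolding eventually_sequentially by blast
  qed
  then show ?thesis by (simp add: filterlim_at_top)
qed

subsection \<open>Perturbations of e_1, ..., e_d\<close>

lemma norm_P_diff_perturbed_le:
  assumes C: "\<forall>n\<ge>1. \<forall>y. cmod (estar n y) \<le> C * norm y" "0 \<le> C"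
    and close: "\<forall>i<d. dist (x i) (e (Suc i)) \<le> \<delta>"
  shows "norm (P y - P (\<Sum>i<d. estar (Suc i) y *\<^sub>C x i)) \<le> onorm P * (d * (C * norm y * \<delta>))"
proof -
  have "P y = (\<Sum>i<d. estar (Suc i) y *\<^sub>C e (Suc i))"
    using P_def by (simp add: sum.atLeast1_atMost_eq)
  then have "P y - (\<Sum>i<d. estar (Suc i) y *\<^sub>C x i) = (\<Sum>i<d. estar (Suc i) y *\<^sub>C (e (Suc i) - x i))"
    by (simp add: scaleC_diff_right sum_subtractf)
  moreover have "norm (\<Sum>i<d. estar (Suc i) y *\<^sub>C (e (Suc i) - x i)) \<le> d * (C * norm y * \<delta>)"
  proof -
    have "norm (estar (Suc i) y *\<^sub>C (e (Suc i) - x i)) \<le> C * norm y * \<delta>" if "i < d" for i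
      using C close that unfolding norm_scaleC
      by (intro mult_mono) (auto simp: dist_norm norm_minus_commute)
    then have "norm (\<Sum>i<d. estar (Suc i) y *\<^sub>C (e (Suc i) - x i)) \<le> (\<Sum>i<d. C * norm y * \<delta>)"
      by (intro sum_norm_le) simp
    then show ?thesis by simp
  qed
  ultimately have small: "norm (P y - (\<Sum>i<d. estar (Suc i) y *\<^sub>C x i)) \<le> d * (C * norm y * \<delta>)"
    by simp
  have bl: "bounded_linear P"
    by (rule bounded_clinear_bounded_linear[OF bounded_clinear_P])
  have "P y - P (\<Sum>i<d. estar (Suc i) y *\<^sub>C x i) = P (P y - (\<Sum>i<d. estar (Suc i) y *\<^sub>C x i))"
    using P_idem clinear_diff[OF clinear_P] by simp
  also have "norm \<dots> \<le> onorm P * norm (P y - (\<Sum>i<d. estar (Suc i) y *\<^sub>C x i))"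
    by (rule onorm[OF bl])
  also have "\<dots> \<le> onorm P * (d * (C * norm y * \<delta>))"
    using small onorm_pos_le[OF bl] by (rule mult_left_mono)
  finally show ?thesis .
qed

lemma P_perturbed_lincomb_onto_V:
  obtains \<delta> where "\<delta> > 0"
    and "\<And>x w. \<forall>i<d. dist (x i) (e (Suc i)) < \<delta> \<Longrightarrow> w \<in> V \<Longrightarrow> \<exists>c. P (\<Sum>i<d. c i *\<^sub>C x i) = w"
proof -
  obtain C where C1: "C \<ge> 1" and C: "\<forall>n\<ge>1. \<forall>y. cmod (estar n y) \<le> C * norm y"
    using estar_uniformly_bounded by blast
  define K where "K = onorm P"
  have K0: "0 \<le> K"
    unfolding K_def by (rule onorm_pos_le[OF bounded_clinear_bounded_linear[OF bounded_clinear_P]])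
  define \<delta> where "\<delta> = 1 / (2 * (K + 1) * d * C)"
  have \<delta>0: "\<delta> > 0" using d_pos C1 K0 by (simp add: \<delta>_def)
  have "\<exists>c. P (\<Sum>i<d. c i *\<^sub>C x i) = w"
    if close: "\<forall>i<d. dist (x i) (e (Suc i)) < \<delta>" and w: "w \<in> V" for x w
  proof -
    define Q where "Q y = (\<Sum>i<d. estar (Suc i) y *\<^sub>C x i)" for y
    have bQ: "bounded_clinear Q"
      unfolding Q_def[abs_def]
      by (auto intro!: bounded_clinear_sum bounded_clinear_scaleC_left bounded_clinear_estar)
    have half: "norm (P y - P (Q y)) \<le> 1/2 * norm y" for y
    proof -
      have "norm (P y - P (Q y)) \<le> K * (d * (C * norm y * \<delta>))"
        using norm_P_diff_perturbed_le[of C x \<delta> y] C C1 close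
        unfolding Q_def K_def by (simp add: less_imp_le)
      also have "\<dots> = K * (real d * C * \<delta>) * norm y"
        by (simp add: algebra_simps)
      also have "real d * C * \<delta> = 1 / (2 * (K + 1))"
        using d_pos C1 K0 by (simp add: \<delta>_def)
      also have "K * (1 / (2 * (K + 1))) * norm y = K / (2 * (K + 1)) * norm y"
        by simp
      also have "\<dots> \<le> 1/2 * norm y"
        using K0 by (intro mult_right_mono) (auto simp: field_simps)
      finally show ?thesis .
    qed
    have "linear Q"
      by (intro bounded_linear.linear bounded_clinear_bounded_linear bQ)
    moreover have "linear P"
      by (intro bounded_linear.linear bounded_clinear_bounded_linear bounded_clinear_P)
    ultimately obtain u where "P (Q u) = w"
      using projection_comp_onto_range[of P Q "1/2" w] P_idem P_V[OF w] half by auto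
    then show ?thesis unfolding Q_def by (rule exI[of _ "\<lambda>i. estar (Suc i) u"])
  qed
  with \<delta>0 show ?thesis by (rule that)
qed

theorem dsum_not_recurrent: "\<not> dsum_recurrent T d"
proof
  assume "dsum_recurrent T d"
  obtain \<delta> where \<delta>: "\<delta> > 0" and onto:
    "\<And>x w. \<forall>i<d. dist (x i) (e (Suc i)) < \<delta> \<Longrightarrow> w \<in> V \<Longrightarrow> \<exists>c. P (\<Sum>i<d. c i *\<^sub>C x i) = w"
    using P_perturbed_lincomb_onto_V by blast
  have "\<forall>\<epsilon>>0. \<exists>x. dsum_recurrent_vector T d x \<and> (\<forall>i<d. dist (x i) (e (Suc i)) < \<epsilon>)"
    using \<open>dsum_recurrent T d\<close> unfolding dsum_recurrent_def by (rule spec)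
  then obtain x where "dsum_recurrent_vector T d x" and close: "\<forall>i<d. dist (x i) (e (Suc i)) < \<delta>"
    using \<delta> by blast
  then obtain \<omega> where \<omega>: "strict_mono \<omega>" and lim: "\<forall>i<d. (\<lambda>n. (T ^^ \<omega> n) (x i)) \<longlonglongrightarrow> x i"
    unfolding dsum_recurrent_vector_def by blast
  have "V - F \<noteq> {}"
    using nonF_dense P_in_V by (metis closure_empty empty_iff subset_empty)
  then obtain w where w: "w \<in> V" "w \<notin> F" by blast
  obtain c where Pz: "P (\<Sum>i<d. c i *\<^sub>C x i) = w"
    using onto close w by blast
  have "(\<lambda>n. (T ^^ \<omega> n) (\<Sum>i<d. c i *\<^sub>C x i)) \<longlonglongrightarrow> (\<Sum>i<d. c i *\<^sub>C x i)"
    by (rule tendsto_funpow_lincomb[OF clinear_T]) (use lim in auto)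
  moreover have "\<not> (\<lambda>n. (T ^^ \<omega> n) (\<Sum>i<d. c i *\<^sub>C x i)) \<longlonglongrightarrow> (\<Sum>i<d. c i *\<^sub>C x i)"
    using not_tendsto_subseq_if_diverges[OF norm_funpow_T_diff_tendsto_top \<omega>] Pz w by blast
  ultimately show False by contradiction
qed

end

theorem proposition3p7:
  fixes e :: "nat \<Rightarrow> 'a::{complex_normed_vector, banach}"
    and estar :: "nat \<Rightarrow> 'a \<Rightarrow> complex"
    and g :: "nat \<Rightarrow> 'a \<Rightarrow> complex"
    and d :: nat and m :: "nat \<Rightarrow> nat"
    and V F :: "'a set"
    and P S T :: "'a \<Rightarrow> 'a"
    and lam :: "nat \<Rightarrow> complex"
  assumes separable: "\<exists>D. countable D \<and> closure D = (UNIV :: 'a set)"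
    and inf_dim: "\<not> (\<exists>B. finite B \<and> cspan B = (UNIV :: 'a set))"
    and d_pos: "1 \<le> d"
    and estar_dual: "\<forall>n\<ge>1. bounded_clinear (estar n)"
    and e_dense: "closure (cspan (e ` {1..})) = UNIV"
    and biorth: "\<forall>n\<ge>1. \<forall>k\<ge>1. estar n (e k) = (if n = k then 1 else 0)"
    and e_norm: "\<forall>n\<ge>1. norm (e n) = 1"
    and estar_bdd: "\<exists>C. \<forall>n\<ge>1. onorm (estar n) \<le> C"
    and V_def: "V = cspan (e ` {1..d})"
    and P_def: "\<forall>x. P x = (\<Sum>i=1..d. estar i x *\<^sub>C e i)"
    and g_dual: "\<forall>n\<ge>1. bounded_clinear (g n)"
    and F_sub: "F \<subseteq> V"
    and F_sep: "\<forall>x\<in>F. liminf (\<lambda>n. ereal (cmod (g n x))) = 0"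
    and nonF_sep: "\<forall>x\<in>V - F. filterlim (\<lambda>n. cmod (g n x)) at_top sequentially"
    and F_dense: "V \<subseteq> closure F"
    and nonF_dense: "V \<subseteq> closure (V - F)"
    and m_pos: "\<forall>k\<ge>1. 0 < m k"
    and m_incr: "\<forall>k\<ge>1. m k < m (Suc k)"
    and m_dvd: "\<forall>k\<ge>1. m k dvd m (Suc k)"
    and m_sum: "summable (\<lambda>k. real (m (k + d - 1)) / real (m (k + d)) * onorm (g (k + d + 1)))"
    and lam_def: "\<forall>k. lam k = (if k \<le> d then 1 else exp (\<i> * of_real pi / of_nat (m k)))"
    and S_bdd: "bounded_clinear S"
    and S_diag: "\<forall>k\<ge>1. S (e k) = lam k *\<^sub>C e k"
    and T_def: "\<forall>x. T x = S x + (\<Sum>k. (if d + 1 \<le> k then (1 / of_nat (m (k - 1))) * g k (P x) else 0) *\<^sub>C e k)"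
  shows "\<not> dsum_recurrent T d"
proof -
  interpret auge_operator e estar g d m V F P S T lam
    by (rule auge_operator.intro) (fact d_pos estar_dual e_dense biorth e_norm estar_bdd V_def P_def
        g_dual nonF_sep nonF_dense m_pos m_incr m_sum lam_def S_bdd S_diag T_def)+
  show ?thesis by (rule dsum_not_recurrent)
qed

end
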